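(* Fix $\alpha\ge0$ and set $\mathsf{INR}=\mathsf{SNR}^\alpha$. Assume that for all sufficiently large $\mathsf{SNR}$ the equation $$2\mathsf{SNR}^{\frac{3\alpha+1}{2}}\rho^4+\mathsf{SNR}^{\alpha}\rho^3-4\left(\mathsf{SNR}^{\frac{3\alpha+1}{2}}+\mathsf{SNR}^{\frac{\alpha+1}{2}}\right)\rho^2-(2+\mathsf{SNR}+2\mathsf{SNR}^\alpha)\rho+2\left(\mathsf{SNR}^{\frac{3\alpha+1}{2}}+\mathsf{SNR}^{\frac{\alpha+1}{2}}\right)=0$$ has a unique solution $\rho^*=\rho^*(\mathsf{SNR})\in(0,1)$, and define $$R_{\mathsf{sym}}(\mathsf{SNR})=\log\left(\frac{1+\mathsf{SNR}+\mathsf{SNR}^\alpha+2\rho^*\mathsf{SNR}^{\frac{\alpha+1}{2}}}{1+(1-\rho^{*2})\mathsf{SNR}^\alpha}\right).$$ Then $\lim_{\mathsf{SNR}\to\infty}R_{\mathsf{sym}}(\mathsf{SNR})/\log\mathsf{SNR}=\underline{d}(\alpha)$, where $\underline{d}(\alpha)=1-\alpha$ for $0\le\alpha<\frac13$, $\underline{d}(\alpha)=\frac{3-\alpha}{4}$ for $\frac13\le\alpha<1$, and $\underline{d}(\alpha)=\frac{1+\alpha}{4}$ for $\alpha\ge1$.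
   Context: $R_{\mathsf{sym}}(\mathsf{SNR})$ is the symmetric rate of Kramer's feedback scheme for the symmetric two-user Gaussian interference channel with feedback, with $\mathsf{SNR}$ the direct-link and $\mathsf{INR}$ the cross-link signal-to-noise ratio. Logarithms base 2. *)

theory Defs
  imports Complex_Main
begin

definition kramer_eq :: "real \<Rightarrow> real \<Rightarrow> real \<Rightarrow> bool" where
  "kramer_eq \<alpha> snr \<rho> \<longleftrightarrow>
     2 * snr powr ((3*\<alpha>+1)/2) * \<rho>^4 + snr powr \<alpha> * \<rho>^3
     - 4 * (snr powr ((3*\<alpha>+1)/2) + snr powr ((\<alpha>+1)/2)) * \<rho>^2
     - (2 + snr + 2 * snr powr \<alpha>) * \<rho>
     + 2 * (snr powr ((3*\<alpha>+1)/2) + snr powr ((\<alpha>+1)/2)) = 0"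

definition rho_star :: "real \<Rightarrow> real \<Rightarrow> real" where
  "rho_star \<alpha> snr = (THE \<rho>. 0 < \<rho> \<and> \<rho> < 1 \<and> kramer_eq \<alpha> snr \<rho>)"

definition R_sym :: "real \<Rightarrow> real \<Rightarrow> real" where
  "R_sym \<alpha> snr = (let \<rho> = rho_star \<alpha> snr in
     log 2 ((1 + snr + snr powr \<alpha> + 2 * \<rho> * snr powr ((\<alpha>+1)/2))
            / (1 + (1 - \<rho>^2) * snr powr \<alpha>)))"

definition d_low :: "real \<Rightarrow> real" where
  "d_low \<alpha> = (if \<alpha> < 1/3 then 1 - \<alpha> else if \<alpha> < 1 then (3 - \<alpha>)/4 else (1 + \<alpha>)/4)"

end

theory Submission
  imports Defs
begin

(*
  Write S = SNR, A = S^((3a+1)/2), B = S^((a+1)/2), C = S^a = INR and m = max a 1, so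
  that S^m is the dominant one among 1, S, B, C.  The argument of the logarithm in R_sym is
  the ratio N/D with N = 1 + S + C + 2 rho B and D = 1 + (1 - rho^2) C.  Always
  S^m <= N <= 5 S^m, so everything hinges on the size of the defect u = 1 - rho*^2.

  The quartic is continuous in rho, positive at 0 and negative at 1; since its root rho*
  in (0,1) is unique, the sign of the quartic at a point r tells on which side of r the
  root lies.  Evaluating the quartic at suitable points shows
    - for a < 1/3: eventually rho* < 1/2, so u is of constant order;
    - for a >= 1/3: u lies within constant factors of S^e, e = m/2 - (3a+1)/4
      (the quartic behaves like 2 A u^2 - (C + S), which changes sign at u^2 ~ S^m / A).
  Hence D lies within constant factors of S^(a+e), and R_sym = (m - a - e) log S + O(1),
  where m - a - e is exactly d_low a.
*)

lemma log_ratio_tendsto: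
  fixes g :: "real \<Rightarrow> real" and b c1 c2 d :: real
  assumes b: "1 < b" and c1: "0 < c1"
    and bounds: "\<forall>\<^sub>F S in at_top. c1 * S powr d \<le> g S \<and> g S \<le> c2 * S powr d"
  shows "((\<lambda>S. log b (g S) / log b S) \<longlongrightarrow> d) at_top"
proof -
  have lim: "((\<lambda>S. d + k / log b S) \<longlongrightarrow> d) at_top" for k
  proof -
    have "((\<lambda>S. (k * ln b) / ln S) \<longlongrightarrow> 0) at_top"
      by (intro tendsto_divide_0[OF tendsto_const] filterlim_at_top_imp_at_infinity ln_at_top)
    then have "((\<lambda>S. k / log b S) \<longlongrightarrow> 0) at_top"
      by (simp add: log_def)
    from tendsto_add[OF tendsto_const this, of d] show ?thesis by simp
  qed
  have squeeze: "\<forall>\<^sub>F S in at_top. d + log b c1 / log b S \<le> log b (g S) / log b S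
                       \<and> log b (g S) / log b S \<le> d + log b c2 / log b S"
    using bounds eventually_gt_at_top[of 1]
  proof eventually_elim
    case (elim S)
    have logS: "0 < log b S" using elim b by simp
    have low: "0 < c1 * S powr d" using elim c1 by simp
    then have "c1 \<le> c2"
      using elim mult_right_le_imp_le[of c1 "S powr d" c2] by fastforce
    then have c2: "0 < c2" using c1 by simp
    have log_scaled: "log b (c * S powr d) = log b c + d * log b S" if "0 < c" for c
      using that elim by (simp add: log_mult log_powr)
    have "log b (c1 * S powr d) \<le> log b (g S)" "log b (g S) \<le> log b (c2 * S powr d)"
      using elim low b c2 by (subst log_le_cancel_iff; force)+
    then have "(log b c1 + d * log b S) / log b S \<le> log b (g S) / log b S"
        "log b (g S) / log b S \<le> (log b c2 + d * log b S) / log b S"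
      using logS c1 c2 by (simp_all add: log_scaled divide_right_mono)
    then show ?case
      using logS by (simp add: add_divide_distrib)
  qed
  show ?thesis
    by (rule tendsto_sandwich[OF eventually_mono[OF squeeze] eventually_mono[OF squeeze] lim lim])
      auto
qed

lemma eventually_powr_dominated:
  fixes p q c :: real
  assumes "p < q"
  shows "\<forall>\<^sub>F S in at_top. c * S powr p \<le> S powr q"
proof -
  have "((\<lambda>S::real. S powr (p - q)) \<longlongrightarrow> 0) at_top"
    using assms by (intro tendsto_neg_powr filterlim_ident) auto
  then have "\<forall>\<^sub>F S in at_top. S powr (p - q) < 1 / (\<bar>c\<bar> + 1)"
    by (rule order_tendstoD) simp
  then show ?thesis using eventually_gt_at_top[of 0]
  proof eventually_elim
    case (elim S)
    have "c * S powr p \<le> \<bar>c\<bar> * S powr p" by (simp add: mult_right_mono)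
    also have "\<dots> = \<bar>c\<bar> * S powr (p - q) * S powr q"
      by (simp add: powr_add[symmetric])
    also have "\<dots> \<le> \<bar>c\<bar> * (1 / (\<bar>c\<bar> + 1)) * S powr q"
      using elim by (intro mult_right_mono mult_left_mono) auto
    also have "\<dots> \<le> S powr q"
      by (intro mult_left_le_one_le) (auto simp: field_simps)
    finally show ?case .
  qed
qed

definition kramer_quartic :: "real \<Rightarrow> real \<Rightarrow> real \<Rightarrow> real \<Rightarrow> real \<Rightarrow> real" where
  "kramer_quartic A B C S r = 2*A*r^4 + C*r^3 - 4*(A+B)*r^2 - (2+S+2*C)*r + 2*(A+B)"

(* Grouping the A-terms as 2 A (1 - r^2)^2 exposes the dominant behaviour near r = 1. *)
lemma kramer_quartic_regroup:
  "kramer_quartic A B C S r = 2*A*(1-r^2)^2 + C*r^3 - 4*B*r^2 - (2+S+2*C)*r + 2*B"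
  unfolding kramer_quartic_def by (simp add: algebra_simps power2_eq_square power4_eq_xxxx)

lemma kramer_quartic_upper:
  assumes "0 \<le> B" "0 \<le> C" "0 \<le> S" "0 \<le> r" "r \<le> 1" "1/2 \<le> r^2"
  shows "kramer_quartic A B C S r \<le> 2*A*(1-r^2)^2 - C/2 - S/2 - 1"
proof -
  have "C*r^3 \<le> C*r^2"
    using assms by (intro mult_left_mono) (auto simp: power_decreasing)
  moreover have "(2+S+2*C)*r^2 \<le> (2+S+2*C)*r"
    using assms by (intro mult_left_mono) (auto simp: power2_eq_square mult_left_le_one_le)
  moreover have "(C+4*B+2+S) * (1/2) \<le> (C+4*B+2+S) * r^2"
    using assms by (intro mult_left_mono) auto
  ultimately show ?thesis
    unfolding kramer_quartic_regroup by (simp add: algebra_simps)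
qed

lemma kramer_quartic_lower:
  assumes "0 \<le> B" "0 \<le> C" "0 \<le> S" "0 \<le> r" "r \<le> 1"
  shows "2*A*(1-r^2)^2 - 2*B - 2 - S - 2*C \<le> kramer_quartic A B C S r"
proof -
  have "0 \<le> C*r^3" using assms by simp
  moreover have "(2+S+2*C)*r \<le> 2+S+2*C"
    using assms by (intro mult_left_le) auto
  moreover have "B * r^2 \<le> B"
    using assms by (intro mult_left_le) (auto simp: power_le_one)
  ultimately show ?thesis
    unfolding kramer_quartic_regroup by linarith
qed

lemma unique_root_sign:
  fixes f :: "real \<Rightarrow> real" and \<rho> r :: real
  assumes cont: "\<And>x. isCont f x" and f0: "0 < f 0" and f1: "f 1 < 0"
    and uniq: "\<And>x. 0 < x \<Longrightarrow> x < 1 \<Longrightarrow> f x = 0 \<Longrightarrow> x = \<rho>"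
    and r: "0 < r" "r < 1"
  shows "f r < 0 \<Longrightarrow> \<rho> < r" and "0 < f r \<Longrightarrow> r < \<rho>"
proof -
  assume neg: "f r < 0"
  obtain x where x: "0 \<le> x" "x \<le> r" "f x = 0"
    using IVT2[of f r 0 0] neg f0 r cont by force
  have "x \<noteq> 0" "x \<noteq> r" using x f0 neg by auto
  then have "x = \<rho>" using x r by (intro uniq) auto
  then show "\<rho> < r" using x \<open>x \<noteq> r\<close> by simp
next
  assume pos: "0 < f r"
  obtain x where x: "r \<le> x" "x \<le> 1" "f x = 0"
    using IVT2[of f 1 0 r] pos f1 r cont by force
  have "x \<noteq> 1" "x \<noteq> r" using x f1 pos by auto
  then have "x = \<rho>" using x r by (intro uniq) auto
  then show "r < \<rho>" using x \<open>x \<noteq> r\<close> by simp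
qed

definition kramer_poly :: "real \<Rightarrow> real \<Rightarrow> real \<Rightarrow> real" where
  "kramer_poly a S = kramer_quartic (S powr ((3*a+1)/2)) (S powr ((a+1)/2)) (S powr a) S"

lemma kramer_eq_iff: "kramer_eq a S r \<longleftrightarrow> kramer_poly a S r = 0"
  unfolding kramer_eq_def kramer_poly_def kramer_quartic_def by simp

lemma rho_star_root:
  assumes "\<exists>!\<rho>. 0 < \<rho> \<and> \<rho> < 1 \<and> kramer_eq a S \<rho>"
  shows "0 < rho_star a S \<and> rho_star a S < 1 \<and> kramer_eq a S (rho_star a S)"
  unfolding rho_star_def using theI'[OF assms] .

lemma defect_from_sign:
  assumes uniq: "\<exists>!\<rho>. 0 < \<rho> \<and> \<rho> < 1 \<and> kramer_eq a S \<rho>"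
    and S: "0 < S" and v: "0 < v" "v < 1"
  shows "kramer_poly a S (sqrt (1 - v)) < 0 \<Longrightarrow> v < 1 - (rho_star a S)^2"
    and "0 < kramer_poly a S (sqrt (1 - v)) \<Longrightarrow> 1 - (rho_star a S)^2 < v"
proof -
  define \<rho> where "\<rho> = rho_star a S"
  define r where "r = sqrt (1 - v)"
  have root: "0 < \<rho> \<and> \<rho> < 1 \<and> kramer_eq a S \<rho>"
    unfolding \<rho>_def using rho_star_root[OF uniq] .
  have r: "0 < r" "r < 1" "r^2 = 1 - v" unfolding r_def using v by auto
  have f0: "0 < kramer_poly a S 0"
    unfolding kramer_poly_def kramer_quartic_def using S by (simp add: add_pos_pos)
  have "kramer_poly a S 1 = - (2 + S + S powr a + 2 * S powr ((a+1)/2))"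
    unfolding kramer_poly_def kramer_quartic_def by simp
  then have f1: "kramer_poly a S 1 < 0"
    using S powr_ge_zero[of S a] powr_ge_zero[of S "(a+1)/2"] by linarith
  have cont: "isCont (kramer_poly a S) x" for x
    unfolding kramer_poly_def kramer_quartic_def by (intro continuous_intros)
  have unique: "x = \<rho>" if "0 < x" "x < 1" "kramer_poly a S x = 0" for x
  proof -
    have "rho_star a S = x"
      unfolding rho_star_def by (rule the1_equality[OF uniq]) (use that in \<open>simp add: kramer_eq_iff\<close>)
    then show ?thesis unfolding \<rho>_def ..
  qed
  note side = unique_root_sign[OF cont f0 f1 unique r(1,2)]
  show "v < 1 - (rho_star a S)^2" if "kramer_poly a S (sqrt (1 - v)) < 0"
  proof -
    have "\<rho> < r" using side(1) that[folded r_def] by blast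
    then have "\<rho>^2 < r^2" using power_strict_mono[of \<rho> r 2] root by simp
    then show ?thesis using r unfolding \<rho>_def by simp
  qed
  show "1 - (rho_star a S)^2 < v" if "0 < kramer_poly a S (sqrt (1 - v))"
  proof -
    have "r < \<rho>" using side(2) that[folded r_def] by blast
    then have "r^2 < \<rho>^2" using power_strict_mono[of r \<rho> 2] r by simp
    then show ?thesis using r unfolding \<rho>_def by simp
  qed
qed

(* Weak interference a < 1/3: since A and B are o(S), the quartic is negative at 1/2,
   so eventually rho* < 1/2 and the defect is at least 3/4. *)
lemma defect_weak_interference:
  assumes a: "a < 1/3"
    and ev: "\<forall>\<^sub>F S in at_top. \<exists>!\<rho>. 0 < \<rho> \<and> \<rho> < 1 \<and> kramer_eq a S \<rho>"
  shows "\<forall>\<^sub>F S in at_top. 3/4 \<le> 1 - (rho_star a S)^2"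
proof -
  have "\<forall>\<^sub>F S in at_top. 5 * S powr ((3*a+1)/2) \<le> S powr 1"
       "\<forall>\<^sub>F S in at_top. 5 * S powr ((a+1)/2) \<le> S powr 1"
    using a by (intro eventually_powr_dominated; simp)+
  with ev eventually_gt_at_top[of 0] show ?thesis
  proof eventually_elim
    case (elim S)
    have "kramer_poly a S (sqrt (1 - 3/4))
        = (9/8) * S powr ((3*a+1)/2) + S powr ((a+1)/2) - (7/8) * S powr a - 1 - S/2"
      by (simp add: kramer_poly_def kramer_quartic_def real_sqrt_divide power_divide field_simps)
    also have "\<dots> < 0"
      using elim powr_ge_zero[of S a] powr_one[of S] by linarith
    finally show ?case
      using defect_from_sign(1)[of a S "3/4"] elim by simp
  qed
qed

lemma dominant_power:
  fixes a S :: real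
  assumes a: "0 \<le> a" and S: "1 \<le> S"
  shows "1 \<le> S powr max a 1" "S \<le> S powr max a 1" "S powr a \<le> S powr max a 1"
    and "S powr ((a+1)/2) \<le> S powr max a 1" "S powr max a 1 \<le> S powr a + S"
proof -
  show "1 \<le> S powr max a 1" using S by (intro ge_one_powr_ge_zero) auto
  show "S \<le> S powr max a 1" using S powr_mono[of 1 "max a 1" S] by simp
  show "S powr a \<le> S powr max a 1" "S powr ((a+1)/2) \<le> S powr max a 1"
    using S by (intro powr_mono; simp)+
  show "S powr max a 1 \<le> S powr a + S" using S by (simp add: max_def)
qed

definition defect_exp :: "real \<Rightarrow> real" where
  "defect_exp a = (if a < 1/3 then 0 else max a 1 / 2 - (3*a+1)/4)"

(* The rate exponent d_low is (exponent of N) - (exponent of D) = m - (a + e). *)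
lemma d_low_eq: "d_low a = max a 1 - a - defect_exp a"
  unfolding d_low_def defect_exp_def max_def by simp

lemma defect_exp_facts:
  shows "0 \<le> a \<Longrightarrow> 0 \<le> a + defect_exp a"
    and "1/3 \<le> a \<Longrightarrow> defect_exp a \<le> 0"
    and "1/3 \<le> a \<Longrightarrow> max a 1 = (3*a+1)/2 + defect_exp a + defect_exp a"
  unfolding defect_exp_def max_def by (simp_all add: field_simps)

(* At these two points 2 A u^2 equals S^m / 8 and 8 S^m, which is
   below resp. above the remaining terms of the quartic. *)
lemma defect_strong_interference:
  assumes a: "1/3 \<le> a" and S: "1 \<le> S"
    and uniq: "\<exists>!\<rho>. 0 < \<rho> \<and> \<rho> < 1 \<and> kramer_eq a S \<rho>"
  shows "S powr defect_exp a / 4 \<le> 1 - (rho_star a S)^2"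
    and "1 - (rho_star a S)^2 \<le> 2 * S powr defect_exp a"
proof -
  define A where "A = S powr ((3*a+1)/2)"
  define B where "B = S powr ((a+1)/2)"
  define C where "C = S powr a"
  define M where "M = S powr max a 1"
  define E where "E = S powr defect_exp a"
  have M: "1 \<le> M" "S \<le> M" "C \<le> M" "B \<le> M" "M \<le> C + S"
    using dominant_power[OF _ S] a unfolding M_def B_def C_def by auto
  have exponent: "max a 1 = (3*a+1)/2 + defect_exp a + defect_exp a"
    using defect_exp_facts(3)[OF a] .
  have scale: "A * E^2 = M"
    unfolding A_def E_def M_def exponent by (simp only: power2_eq_square powr_add mult.assoc)
  have E: "0 < E" "E \<le> 1"
    using S defect_exp_facts(2)[OF a] powr_mono[of "defect_exp a" 0 S] unfolding E_def by auto
  have quartic: "kramer_poly a S (sqrt (1 - v)) = kramer_quartic A B C S (sqrt (1 - v))" for v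
    unfolding kramer_poly_def A_def B_def C_def ..
  have BC: "0 \<le> B" "0 \<le> C" unfolding B_def C_def by auto
  have "kramer_poly a S (sqrt (1 - E/4)) \<le> 2*A*(E/4)^2 - C/2 - S/2 - 1"
    unfolding quartic using kramer_quartic_upper[OF BC, of S "sqrt (1 - E/4)"] E S by simp
  also have "\<dots> < 0" using scale M by (simp add: power_divide)
  finally show "E/4 \<le> 1 - (rho_star a S)^2" unfolding E_def[symmetric]
    using defect_from_sign(1)[OF uniq, of "E/4"] E S by simp
  show "1 - (rho_star a S)^2 \<le> 2 * E"
  proof (cases "2 * E < 1")
    case True
    have "0 < 2*A*(2*E)^2 - 2*B - 2 - S - 2*C" using scale M by (simp add: power_mult_distrib)
    also have "\<dots> \<le> kramer_poly a S (sqrt (1 - 2*E))"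
      unfolding quartic using kramer_quartic_lower[OF BC, of S "sqrt (1 - 2*E)"] E S True by simp
    finally show ?thesis
      using defect_from_sign(2)[OF uniq, of "2*E"] E S True by simp
  next
    case False
    then show ?thesis using zero_le_power2[of "rho_star a S"] by linarith
  qed
qed

definition rate_ratio :: "real \<Rightarrow> real \<Rightarrow> real \<Rightarrow> real" where
  "rate_ratio a S \<rho> = (1 + S + S powr a + 2*\<rho>*S powr ((a+1)/2)) / (1 + (1 - \<rho>^2) * S powr a)"

lemma R_sym_eq: "R_sym a S = log 2 (rate_ratio a S (rho_star a S))"
  unfolding R_sym_def rate_ratio_def Let_def ..

(* If the defect is within constant factors of S^e, the rate ratio is within constant
   factors of S^(m - a - e): the numerator is of order S^m, the denominator of order
   S^(a + e). *)
lemma rate_ratio_bounds: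
  assumes a: "0 \<le> a" and S: "1 \<le> S" and \<rho>: "0 < \<rho>" "\<rho> < 1" and c1: "0 < c1"
    and defect: "c1 * S powr e \<le> 1 - \<rho>^2" "1 - \<rho>^2 \<le> c2 * S powr e"
    and ae: "0 \<le> a + e"
  shows "S powr (max a 1 - a - e) / (1 + c2) \<le> rate_ratio a S \<rho>"
    and "rate_ratio a S \<rho> \<le> 5 / c1 * S powr (max a 1 - a - e)"
proof -
  define N where "N = 1 + S + S powr a + 2*\<rho>*S powr ((a+1)/2)"
  define D where "D = 1 + (1 - \<rho>^2) * S powr a"
  define M where "M = S powr max a 1"
  define P where "P = S powr (a + e)"
  have M: "1 \<le> M" "S \<le> M" "S powr a \<le> M" "S powr ((a+1)/2) \<le> M" "M \<le> S powr a + S"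
    using dominant_power[OF a S] unfolding M_def by auto
  have "0 \<le> 2*\<rho>*S powr ((a+1)/2)" "2*\<rho>*S powr ((a+1)/2) \<le> 2 * S powr ((a+1)/2)"
    using \<rho> by (auto simp: mult_left_le_one_le)
  then have N: "M \<le> N" "N \<le> 5*M" unfolding N_def using M by linarith+
  have P: "1 \<le> P" unfolding P_def using S ae by (intro ge_one_powr_ge_zero)
  have "0 < 1 - \<rho>^2" using \<rho> by (simp add: power_less_one_iff)
  then have "0 < c2 * S powr e" using defect(2) by linarith
  then have c2: "0 < c2" using S by (simp add: zero_less_mult_iff)
  have defectC: "c1 * P \<le> (1 - \<rho>^2) * S powr a" "(1 - \<rho>^2) * S powr a \<le> c2 * P"
    using mult_right_mono[OF defect(1), of "S powr a"] mult_right_mono[OF defect(2), of "S powr a"]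
    unfolding P_def by (simp_all add: powr_add mult_ac)
  have D: "c1 * P \<le> D" "D \<le> (1 + c2) * P"
    unfolding D_def using defectC P by (auto simp: algebra_simps)
  have "0 < c1 * P" using c1 P by simp
  then have D_pos: "0 < D" using D by linarith
  have ratio: "S powr (max a 1 - a - e) = M / P"
    unfolding M_def P_def by (simp add: powr_diff[symmetric] diff_diff_eq)
  have "M / P / (1 + c2) \<le> N / D"
    using N D D_pos P c2 frac_le[of N M D "(1 + c2) * P"] by (simp add: mult.commute)
  moreover have "N / D \<le> 5 / c1 * (M / P)"
    using N D D_pos P c1 frac_le[of "5*M" N "c1 * P" D] by simp
  ultimately show "S powr (max a 1 - a - e) / (1 + c2) \<le> rate_ratio a S \<rho>"
    and "rate_ratio a S \<rho> \<le> 5 / c1 * S powr (max a 1 - a - e)"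
    unfolding rate_ratio_def ratio N_def D_def by simp_all
qed

lemma rate_ratio_order:
  assumes a: "0 \<le> a"
    and ev: "\<forall>\<^sub>F S in at_top. \<exists>!\<rho>. 0 < \<rho> \<and> \<rho> < 1 \<and> kramer_eq a S \<rho>"
  obtains c1 c2 where "0 < c1" and "\<forall>\<^sub>F S in at_top.
    c1 * S powr d_low a \<le> rate_ratio a S (rho_star a S)
    \<and> rate_ratio a S (rho_star a S) \<le> c2 * S powr d_low a"
proof -
  define e where "e = defect_exp a"
  have ae: "0 \<le> a + e" using defect_exp_facts(1)[OF a] unfolding e_def .
  obtain c1 c2 where c1: "0 < c1" and c2: "0 < c2" and defect: "\<forall>\<^sub>F S in at_top.
      c1 * S powr e \<le> 1 - (rho_star a S)^2 \<and> 1 - (rho_star a S)^2 \<le> c2 * S powr e"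
  proof (cases "a < 1/3")
    case True
    have "e = 0" unfolding e_def defect_exp_def using True by simp
    have weak: "\<forall>\<^sub>F S in at_top.
        3/4 * S powr e \<le> 1 - (rho_star a S)^2 \<and> 1 - (rho_star a S)^2 \<le> 1 * S powr e"
      using defect_weak_interference[OF True ev] eventually_gt_at_top[of 0]
      by eventually_elim (simp add: \<open>e = 0\<close>)
    show ?thesis using that[of "3/4" 1, OF _ _ weak] by simp
  next
    case False
    have strong: "\<forall>\<^sub>F S in at_top.
        1/4 * S powr e \<le> 1 - (rho_star a S)^2 \<and> 1 - (rho_star a S)^2 \<le> 2 * S powr e"
      using ev eventually_ge_at_top[of 1] unfolding e_def
      by eventually_elim (use False defect_strong_interference in auto)
    show ?thesis using that[of "1/4" 2, OF _ _ strong] by simp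
  qed
  have order: "\<forall>\<^sub>F S in at_top.
      1 / (1 + c2) * S powr d_low a \<le> rate_ratio a S (rho_star a S)
      \<and> rate_ratio a S (rho_star a S) \<le> 5 / c1 * S powr d_low a"
    using defect ev eventually_ge_at_top[of 1]
  proof eventually_elim
    case (elim S)
    have "0 < rho_star a S" "rho_star a S < 1" using rho_star_root[OF elim(2)] by auto
    then show ?case
      using rate_ratio_bounds[OF a elim(3) _ _ c1 _ _ ae] elim(1) unfolding d_low_eq e_def by auto
  qed
  show ?thesis using c2 by (intro that[OF _ order]) simp
qed

theorem lemma2:
  fixes \<alpha> :: real
  assumes "\<alpha> \<ge> 0"
    and "eventually (\<lambda>snr. \<exists>!\<rho>. 0 < \<rho> \<and> \<rho> < 1 \<and> kramer_eq \<alpha> snr \<rho>) at_top"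
  shows "((\<lambda>snr. R_sym \<alpha> snr / log 2 snr) \<longlongrightarrow> d_low \<alpha>) at_top"
proof -
  obtain c1 c2 where "0 < c1" and "\<forall>\<^sub>F S in at_top.
      c1 * S powr d_low \<alpha> \<le> rate_ratio \<alpha> S (rho_star \<alpha> S)
      \<and> rate_ratio \<alpha> S (rho_star \<alpha> S) \<le> c2 * S powr d_low \<alpha>"
    using rate_ratio_order[OF assms] .
  from log_ratio_tendsto[of 2, OF _ this] show ?thesis
    unfolding R_sym_eq by simp
qed

end
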